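(* For any $\sigma$-structure $\mathbf D$, the family $\mathcal H_{\mathbf D}=\{\mathbf A\in\mathbb F:\mathbf A\to\mathbf D\}$ is regular.
   Context: Fix a type $\sigma$ (finite set of relation symbols with arities); $\sigma$-structures are finite sets with an $r$-ary relation per symbol of arity $r$; $\mathbf A\to\mathbf D$ means there is a relation-preserving map $V(\mathbf A)\to V(\mathbf D)$. $\mathrm{Inc}(\mathbf A)$ is the bipartite multigraph with parts $V(\mathbf A)$ and the blocks $(R,(x_1,\dots,x_r))$, $(x_1,\dots,x_r)\in R(\mathbf A)$, with one edge joining $x_i$ to the block for each $i$; $\mathbf A$ is a $\sigma$-forest if $\mathrm{Inc}(\mathbf A)$ has no cycles or parallel edges. $\mathbb F$ is the set of isomorphism classes of $\sigma$-forests, $\mathbb F_{\mathrm r}$ that of rooted $\sigma$-forests. $(\mathbf A,a)+(\mathbf B,b)$: disjoint union with $a,b$ identified as new root; $[(\mathbf A,a)]$ forgets the root. $\mathcal O\subseteq\mathbb F$ is regular if there are only finitely many distinct sets $\mathcal O-(\mathbf A,a)=\{(\mathbf B,b)\in\mathbb F_{\mathrm r}:[(\mathbf A,a)+(\mathbf B,b)]\in\mathcal O\}$, $(\mathbf A,a)\in\mathbb F_{\mathrm r}$. *)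

theory Defs
  imports Main
begin

text \<open>A type sigma is given by a finite type of relation symbols 'r together
with an arity function ar.\<close>

datatype ('r, 'v) struct = Struct (univ: "'v set") (rels: "'r \<Rightarrow> 'v list set")

definition is_struct :: "('r \<Rightarrow> nat) \<Rightarrow> ('r, 'v) struct \<Rightarrow> bool" where
  "is_struct ar A \<longleftrightarrow> finite (univ A) \<and>
     (\<forall>R. \<forall>t \<in> rels A R. length t = ar R \<and> set t \<subseteq> univ A)"

definition hom_exists :: "('r, 'v) struct \<Rightarrow> ('r, 'w) struct \<Rightarrow> bool" where
  "hom_exists A D \<longleftrightarrow> (\<exists>f. f ` univ A \<subseteq> univ D \<and>
     (\<forall>R. \<forall>t \<in> rels A R. map f t \<in> rels D R))"

text \<open>Blocks of the incidence multigraph Inc(A): pairs (R, t) with t in R(A).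
Block (R,t) is joined to t!i by one edge for each position i.\<close>
definition blocks :: "('r, 'v) struct \<Rightarrow> ('r \<times> 'v list) set" where
  "blocks A = {(R, t). t \<in> rels A R}"

definition no_parallel :: "('r, 'v) struct \<Rightarrow> bool" where
  "no_parallel A \<longleftrightarrow> (\<forall>(R, t) \<in> blocks A. distinct t)"

text \<open>A cycle in the bipartite graph Inc(A) (in the absence of parallel edges):
k \<ge> 2 distinct vertices vs and k distinct blocks bs such that block i is incident
with vertex i and vertex (i+1) mod k.\<close>
definition has_inc_cycle :: "('r, 'v) struct \<Rightarrow> bool" where
  "has_inc_cycle A \<longleftrightarrow> (\<exists>vs bs. length vs \<ge> 2 \<and> length bs = length vs \<and>
     distinct vs \<and> distinct bs \<and> set vs \<subseteq> univ A \<and> set bs \<subseteq> blocks A \<and>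
     (\<forall>i < length vs. vs ! i \<in> set (snd (bs ! i)) \<and>
                       vs ! ((i + 1) mod length vs) \<in> set (snd (bs ! i))))"

definition forest :: "('r \<Rightarrow> nat) \<Rightarrow> ('r, 'v) struct \<Rightarrow> bool" where
  "forest ar A \<longleftrightarrow> is_struct ar A \<and> no_parallel A \<and> \<not> has_inc_cycle A"

definition rooted_forest :: "('r \<Rightarrow> nat) \<Rightarrow> ('r, 'v) struct \<Rightarrow> 'v \<Rightarrow> bool" where
  "rooted_forest ar A a \<longleftrightarrow> forest ar A \<and> a \<in> univ A"

text \<open>C is (a copy of) [(A,a) + (B,b)]: the disjoint union of A and B with a and b
identified (root forgotten).\<close>
definition is_sum :: "('r, 'v) struct \<Rightarrow> 'v \<Rightarrow> ('r, 'v) struct \<Rightarrow> 'v \<Rightarrow> ('r, 'v) struct \<Rightarrow> bool" where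
  "is_sum A a B b C \<longleftrightarrow> (\<exists>f g. inj_on f (univ A) \<and> inj_on g (univ B) \<and>
     f a = g b \<and> univ C = f ` univ A \<union> g ` univ B \<and>
     f ` univ A \<inter> g ` univ B = {f a} \<and>
     (\<forall>R. rels C R = map f ` rels A R \<union> map g ` rels B R))"

text \<open>Isomorphism classes are represented by concrete structures over the infinite
vertex type nat (every finite structure has a copy there).\<close>
definition residual :: "('r \<Rightarrow> nat) \<Rightarrow> ('r, nat) struct set \<Rightarrow> ('r, nat) struct \<Rightarrow> nat
     \<Rightarrow> (('r, nat) struct \<times> nat) set" where
  "residual ar Fam A a = {(B, b). rooted_forest ar B b \<and> (\<exists>C. is_sum A a B b C \<and> C \<in> Fam)}"

definition regular :: "('r \<Rightarrow> nat) \<Rightarrow> ('r, nat) struct set \<Rightarrow> bool" where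
  "regular ar Fam \<longleftrightarrow> finite {residual ar Fam A a | A a. rooted_forest ar A a}"

end

theory Submission
  imports Defs
begin

text \<open>Whether [(A,a) + (B,b)] maps to D depends on (B,b) only through the set of
vertices of D that the root b can be sent to: the sum maps to D iff some vertex of D
is the image of a under a homomorphism A \<rightarrow> D and of b under a homomorphism
B \<rightarrow> D. This uses that the gluing is along a single vertex, and that the sum of
two forests is again a forest (a cycle in the sum cannot pass through the glued vertex
twice, so it stays on one side). Hence the residual of the family at (A,a) is
determined by a subset of the finite set V(D), and there are finitely many residuals.\<close>

definition is_hom :: "('v \<Rightarrow> 'w) \<Rightarrow> ('r, 'v) struct \<Rightarrow> ('r, 'w) struct \<Rightarrow> bool" where
  "is_hom h A D \<longleftrightarrow> h ` univ A \<subseteq> univ D \<and> (\<forall>R. \<forall>t \<in> rels A R. map h t \<in> rels D R)"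

lemma hom_exists_iff_is_hom: "hom_exists A D \<longleftrightarrow> (\<exists>h. is_hom h A D)"
  unfolding hom_exists_def is_hom_def ..

definition root_images :: "('r, 'v) struct \<Rightarrow> 'v \<Rightarrow> ('r, 'w) struct \<Rightarrow> 'w set" where
  "root_images A a D = {h a | h. is_hom h A D}"

lemma root_images_subset:
  assumes "a \<in> univ A"
  shows "root_images A a D \<subseteq> univ D"
  using assms unfolding root_images_def is_hom_def by blast

lemma is_struct_tuple_subset:
  assumes "is_struct ar A" "t \<in> rels A R"
  shows "set t \<subseteq> univ A"
  using assms unfolding is_struct_def by blast

lemma is_sumE:
  assumes "is_sum A a B b C"
  obtains f g where "inj_on f (univ A)" "inj_on g (univ B)" "f a = g b"
    "univ C = f ` univ A \<union> g ` univ B" "f ` univ A \<inter> g ` univ B = {f a}"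
    "\<And>R. rels C R = map f ` rels A R \<union> map g ` rels B R"
  using assms unfolding is_sum_def by blast

lemma is_sum_exists:
  fixes A B :: "('r, nat) struct"
  assumes "finite (univ A)" "a \<in> univ A" "b \<in> univ B"
  shows "\<exists>C. is_sum A a B b C"
proof -
  define N where "N = Suc (Max (univ A))"
  have below_N: "x < N" if "x \<in> univ A" for x
    using assms(1) that unfolding N_def by (simp add: le_imp_less_Suc)
  define g where "g x = (if x = b then a else x + N)" for x
  have "inj_on g (univ B)"
    unfolding inj_on_def g_def using below_N[OF assms(2)] by auto
  moreover have "id ` univ A \<inter> g ` univ B = {id a}"
  proof -
    have "g x \<notin> univ A" if "x \<in> univ B" "x \<noteq> b" for x
      using that below_N[of "x + N"] by (auto simp: g_def)
    moreover have "g b = a" by (simp add: g_def)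
    ultimately show ?thesis using assms(2,3) by auto
  qed
  moreover have "g b = id a" by (simp add: g_def)
  ultimately have "is_sum A a B b
      (Struct (id ` univ A \<union> g ` univ B) (\<lambda>R. map id ` rels A R \<union> map g ` rels B R))"
    unfolding is_sum_def by (intro exI[of _ id] exI[of _ g]) simp
  then show ?thesis by blast
qed

lemma hom_exists_sum_iff:
  fixes D :: "('r, 'd) struct"
  assumes sum: "is_sum A a B b C" and "is_struct ar A" "is_struct ar B"
    and "a \<in> univ A" "b \<in> univ B"
  shows "hom_exists C D \<longleftrightarrow> root_images A a D \<inter> root_images B b D \<noteq> {}"
proof -
  obtain f g where inj_f: "inj_on f (univ A)" and inj_g: "inj_on g (univ B)"
    and glue: "f a = g b" and univ_C: "univ C = f ` univ A \<union> g ` univ B"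
    and overlap: "f ` univ A \<inter> g ` univ B = {f a}"
    and rels_C: "\<And>R. rels C R = map f ` rels A R \<union> map g ` rels B R"
    using sum by (rule is_sumE) (rule that)
  show ?thesis
  proof
    assume "hom_exists C D"
    then obtain p where p: "is_hom p C D"
      by (auto simp: hom_exists_iff_is_hom)
    have "is_hom (p \<circ> f) A D" "is_hom (p \<circ> g) B D"
      using p unfolding is_hom_def univ_C rels_C by (auto simp flip: map_map)
    then have "(p \<circ> f) a \<in> root_images A a D" "(p \<circ> g) b \<in> root_images B b D"
      unfolding root_images_def by blast+
    then show "root_images A a D \<inter> root_images B b D \<noteq> {}"
      using glue by (metis comp_apply disjoint_iff)
  next
    assume "root_images A a D \<inter> root_images B b D \<noteq> {}"
    then obtain hA hB where hA: "is_hom hA A D" and hB: "is_hom hB B D"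
      and same_root: "hA a = hB b"
      unfolding root_images_def by blast
    define p where "p y = (if y \<in> f ` univ A then hA (inv_into (univ A) f y)
      else hB (inv_into (univ B) g y))" for y
    have p_f: "p (f x) = hA x" if "x \<in> univ A" for x
      using that inj_f by (simp add: p_def)
    have p_g: "p (g x) = hB x" if x: "x \<in> univ B" for x
    proof (cases "g x \<in> f ` univ A")
      case True
      then have "g x = f a" using overlap x by blast
      then have "g x = g b" using glue by simp
      then have "x = b" using inj_g x \<open>b \<in> univ B\<close> by (simp add: inj_on_eq_iff)
      then show ?thesis using p_f[OF \<open>a \<in> univ A\<close>] glue same_root by simp
    qed (use x inj_g in \<open>simp add: p_def\<close>)
    have map_p_f: "map p (map f t) = map hA t" if "t \<in> rels A R" for t R
      using is_struct_tuple_subset[OF \<open>is_struct ar A\<close> that] p_f by (auto simp: subset_iff)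
    have map_p_g: "map p (map g t) = map hB t" if "t \<in> rels B R" for t R
      using is_struct_tuple_subset[OF \<open>is_struct ar B\<close> that] p_g by (auto simp: subset_iff)
    have "is_hom p C D"
      using hA hB p_f p_g map_p_f map_p_g unfolding is_hom_def univ_C rels_C
      by (auto simp del: map_map)
    then show "hom_exists C D" by (auto simp: hom_exists_iff_is_hom)
  qed
qed

lemma mod_cycle_exit:
  assumes "i0 < k" "P i0" "j0 < k" "\<not> P j0"
  shows "\<exists>i<k. P i \<and> \<not> P (Suc i mod k)"
proof (rule ccontr)
  assume "\<not> ?thesis"
  then have step: "\<And>i. i < k \<Longrightarrow> P i \<Longrightarrow> P (Suc i mod k)" by blast
  have "P ((i0 + n) mod k)" for n
  proof (induction n)
    case 0
    then show ?case using assms by simp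
  next
    case (Suc n)
    have "P (Suc ((i0 + n) mod k) mod k)"
      using step[OF _ Suc] assms(1) by simp
    then show ?case by (simp add: mod_Suc_eq)
  qed
  from this[of "j0 + k - i0"] have "P ((j0 + k) mod k)"
    using assms(1) by (simp add: add.commute)
  then show False using assms(3,4) by simp
qed

lemma Suc_mod_eq_imp_eq:
  assumes "i < k" "j < k" "Suc i mod k = Suc j mod k"
  shows "i = j"
proof -
  have "Suc i mod k = (if Suc i = k then 0 else Suc i)"
    "Suc j mod k = (if Suc j = k then 0 else Suc j)"
    using assms by auto
  then show ?thesis using assms(3) by (auto split: if_splits)
qed

lemma has_inc_cycle_preimage:
  assumes inj_f: "inj_on f (univ A)" and "is_struct ar A"
    and len: "length vs \<ge> 2" "length bs = length vs"
    and "distinct vs" "distinct bs"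
    and from_A: "\<forall>i<length vs. \<exists>R t. bs ! i = (R, map f t) \<and> t \<in> rels A R"
    and incident: "\<forall>i < length vs. vs ! i \<in> set (snd (bs ! i)) \<and>
                     vs ! ((i + 1) mod length vs) \<in> set (snd (bs ! i))"
  shows "has_inc_cycle A"
proof -
  define h where "h = inv_into (univ A) f"
  have tuple_univ: "set t \<subseteq> univ A" if "t \<in> rels A R" for t R
    using is_struct_tuple_subset[OF \<open>is_struct ar A\<close> that] .
  have h_f: "map h (map f t) = t" if "set t \<subseteq> univ A" for t
    using that inj_f unfolding h_def by (induction t) auto
  define bs' where "bs' = map (\<lambda>(R, u). (R, map h u)) bs"
  have bs'_nth: "bs' ! i = (R, t)" if "i < length vs" "bs ! i = (R, map f t)" "t \<in> rels A R"
    for i R t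
    using that len h_f[OF tuple_univ[OF that(3)]] unfolding bs'_def by simp
  have vs_image: "vs ! i \<in> f ` univ A" if i: "i < length vs" for i
  proof -
    obtain R t where "bs ! i = (R, map f t)" "t \<in> rels A R" using from_A i by blast
    then show ?thesis using incident i tuple_univ by fastforce
  qed
  then have "set vs \<subseteq> f ` univ A" by (auto simp: in_set_conv_nth)
  moreover have "inj_on h (f ` univ A)" unfolding h_def by (rule inj_on_inv_into) simp
  ultimately have "inj_on h (set vs)" by (rule inj_on_subset[rotated])
  have h_incident: "h x \<in> set t" if "x \<in> set (map f t)" "set t \<subseteq> univ A" for x t
    using that inj_f unfolding h_def by auto
  show ?thesis
    unfolding has_inc_cycle_def
  proof (intro exI conjI allI impI)
    show "2 \<le> length (map h vs)" "length bs' = length (map h vs)"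
      using len by (auto simp: bs'_def)
    show "distinct (map h vs)"
      using \<open>distinct vs\<close> \<open>inj_on h (set vs)\<close> by (simp add: distinct_map)
    show "distinct bs'"
      unfolding distinct_conv_nth
    proof (intro allI impI)
      fix i j assume ij: "i < length bs'" "j < length bs'" "i \<noteq> j"
      obtain R t where i: "bs ! i = (R, map f t)" "t \<in> rels A R"
        using from_A ij len by (auto simp: bs'_def)
      obtain R' t' where j: "bs ! j = (R', map f t')" "t' \<in> rels A R'"
        using from_A ij len by (auto simp: bs'_def)
      have "bs ! i \<noteq> bs ! j"
        using \<open>distinct bs\<close> ij by (auto simp: bs'_def nth_eq_iff_index_eq)
      then show "bs' ! i \<noteq> bs' ! j"
        using bs'_nth[OF _ i] bs'_nth[OF _ j] ij len i j by (auto simp: bs'_def)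
    qed
    show "set (map h vs) \<subseteq> univ A"
      using vs_image unfolding h_def by (auto simp: in_set_conv_nth inv_into_into)
    show "set bs' \<subseteq> blocks A"
    proof
      fix x assume "x \<in> set bs'"
      then obtain i where i: "i < length vs" "x = bs' ! i"
        using len by (auto simp: in_set_conv_nth bs'_def)
      obtain R t where "bs ! i = (R, map f t)" "t \<in> rels A R" using from_A i by blast
      then show "x \<in> blocks A" using bs'_nth i by (auto simp: blocks_def)
    qed
  next
    fix i assume "i < length (map h vs)"
    then have i: "i < length vs" by simp
    obtain R t where block: "bs ! i = (R, map f t)" "t \<in> rels A R" using from_A i by blast
    have next_i: "(i + 1) mod length vs < length vs" using len by (intro mod_less_divisor) linarith
    have "vs ! i \<in> set (map f t)" "vs ! ((i + 1) mod length vs) \<in> set (map f t)"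
      using incident i block by (metis snd_conv)+
    then show "map h vs ! i \<in> set (snd (bs' ! i))"
      and "map h vs ! ((i + 1) mod length (map h vs)) \<in> set (snd (bs' ! i))"
      using h_incident[OF _ tuple_univ[OF block(2)]] bs'_nth[OF i block] i next_i by simp_all
  qed
qed

lemma is_struct_sum:
  assumes "is_sum A a B b C" "is_struct ar A" "is_struct ar B"
  shows "is_struct ar C"
proof -
  obtain f g where "univ C = f ` univ A \<union> g ` univ B"
    and "\<And>R. rels C R = map f ` rels A R \<union> map g ` rels B R"
    using assms(1) by (rule is_sumE) (rule that)
  then show ?thesis
    using assms(2,3) unfolding is_struct_def by fastforce
qed

lemma no_parallel_sum:
  assumes "is_sum A a B b C" "is_struct ar A" "is_struct ar B" "no_parallel A" "no_parallel B"
  shows "no_parallel C"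
proof -
  obtain f g where "inj_on f (univ A)" "inj_on g (univ B)"
    and "\<And>R. rels C R = map f ` rels A R \<union> map g ` rels B R"
    using assms(1) by (rule is_sumE) (rule that)
  then show ?thesis
    using assms(4,5) is_struct_tuple_subset[OF assms(2)] is_struct_tuple_subset[OF assms(3)]
    unfolding no_parallel_def blocks_def
    by (auto simp: distinct_map) (metis inj_on_subset)+
qed

lemma no_inc_cycle_sum:
  assumes sum: "is_sum A a B b C" and "is_struct ar A" "is_struct ar B"
    and "\<not> has_inc_cycle A" "\<not> has_inc_cycle B"
  shows "\<not> has_inc_cycle C"
proof
  obtain f g where inj_f: "inj_on f (univ A)" and inj_g: "inj_on g (univ B)"
    and overlap: "f ` univ A \<inter> g ` univ B = {f a}"
    and rels_C: "\<And>R. rels C R = map f ` rels A R \<union> map g ` rels B R"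
    using sum by (rule is_sumE) (rule that)
  assume "has_inc_cycle C"
  then obtain vs bs where len: "length vs \<ge> 2" "length bs = length vs"
    and "distinct vs" "distinct bs" and "set bs \<subseteq> blocks C"
    and incident: "\<forall>i < length vs. vs ! i \<in> set (snd (bs ! i)) \<and>
                     vs ! ((i + 1) mod length vs) \<in> set (snd (bs ! i))"
    unfolding has_inc_cycle_def by blast
  define k where "k = length vs"
  define in_A where "in_A i \<longleftrightarrow> (\<exists>R t. bs ! i = (R, map f t) \<and> t \<in> rels A R)" for i
  define in_B where "in_B i \<longleftrightarrow> (\<exists>R t. bs ! i = (R, map g t) \<and> t \<in> rels B R)" for i
  have A_or_B: "in_A i \<or> in_B i" if "i < k" for i
  proof -
    have "bs ! i \<in> blocks C" using \<open>set bs \<subseteq> blocks C\<close> that len k_def by auto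
    then show ?thesis using rels_C unfolding in_A_def in_B_def blocks_def by auto
  qed
  have vertex_A: "x \<in> f ` univ A" if "in_A i" "x \<in> set (snd (bs ! i))" for i x
    using that is_struct_tuple_subset[OF \<open>is_struct ar A\<close>] unfolding in_A_def by fastforce
  have vertex_B: "x \<in> g ` univ B" if "in_B i" "x \<in> set (snd (bs ! i))" for i x
    using that is_struct_tuple_subset[OF \<open>is_struct ar B\<close>] unfolding in_B_def by fastforce
  have incident': "vs ! i \<in> set (snd (bs ! i))" "vs ! (Suc i mod k) \<in> set (snd (bs ! i))"
    if "i < k" for i
    using incident that k_def by auto
  have next_lt: "Suc i mod k < k" for i using len k_def by (intro mod_less_divisor) linarith
  have crossing_at_root: "vs ! (Suc i mod k) = f a"
    if "i < k" "in_A i \<noteq> in_A (Suc i mod k)" for i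
  proof -
    have "vs ! (Suc i mod k) \<in> f ` univ A \<inter> g ` univ B"
      using that(2) A_or_B[OF that(1)] A_or_B[OF next_lt] vertex_A vertex_B
        incident'[OF that(1)] incident'[OF next_lt] by blast
    then show ?thesis using overlap by blast
  qed
  consider "\<forall>i<k. in_A i" | "\<forall>i<k. \<not> in_A i"
    | i0 j0 where "i0 < k" "in_A i0" "j0 < k" "\<not> in_A j0" by blast
  then show False
  proof cases
    case 1
    then have "has_inc_cycle A"
      using has_inc_cycle_preimage[OF inj_f \<open>is_struct ar A\<close> len \<open>distinct vs\<close> \<open>distinct bs\<close>]
        incident by (simp add: in_A_def k_def)
    then show False using \<open>\<not> has_inc_cycle A\<close> by simp
  next
    case 2
    then have "has_inc_cycle B"
      using has_inc_cycle_preimage[OF inj_g \<open>is_struct ar B\<close> len \<open>distinct vs\<close> \<open>distinct bs\<close>]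
        incident A_or_B by (simp add: in_B_def k_def)
    then show False using \<open>\<not> has_inc_cycle B\<close> by simp
  next
    case 3
    text \<open>The cycle leaves A at some i and re-enters at some j, both times through
      the glued vertex; distinctness of the vertices forces i = j.\<close>
    obtain i where i: "i < k" "in_A i" "\<not> in_A (Suc i mod k)"
      using mod_cycle_exit[of _ k in_A] 3 by blast
    obtain j where j: "j < k" "\<not> in_A j" "in_A (Suc j mod k)"
      using mod_cycle_exit[of _ k "\<lambda>i. \<not> in_A i"] 3 by blast
    have "vs ! (Suc i mod k) = vs ! (Suc j mod k)"
      using crossing_at_root[of i] crossing_at_root[of j] i j by simp
    then have "Suc i mod k = Suc j mod k"
      using \<open>distinct vs\<close> next_lt k_def by (simp add: nth_eq_iff_index_eq)
    then have "i = j" using Suc_mod_eq_imp_eq i(1) j(1) by blast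
    then show False using i j by simp
  qed
qed

lemma forest_sum:
  assumes "is_sum A a B b C" "forest ar A" "forest ar B"
  shows "forest ar C"
  using assms is_struct_sum no_parallel_sum no_inc_cycle_sum
  unfolding forest_def by metis

definition compatible_roots ::
    "('r \<Rightarrow> nat) \<Rightarrow> ('r, 'd) struct \<Rightarrow> 'd set \<Rightarrow> (('r, nat) struct \<times> nat) set" where
  "compatible_roots ar D X = {(B, b). rooted_forest ar B b \<and> X \<inter> root_images B b D \<noteq> {}}"

lemma residual_hom_forests:
  fixes D :: "('r, 'd) struct"
  assumes "rooted_forest ar A a"
  shows "residual ar {A :: ('r, nat) struct. forest ar A \<and> hom_exists A D} A a
       = compatible_roots ar D (root_images A a D)"
proof -
  have "forest ar A" "a \<in> univ A" using assms by (auto simp: rooted_forest_def)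
  then have "is_struct ar A" by (simp add: forest_def)
  have "(B, b) \<in> residual ar {A. forest ar A \<and> hom_exists A D} A a
    \<longleftrightarrow> (B, b) \<in> compatible_roots ar D (root_images A a D)"
    if B_root: "rooted_forest ar B b" for B b
  proof -
    have "forest ar B" "b \<in> univ B" "is_struct ar B"
      using B_root by (auto simp: rooted_forest_def forest_def)
    obtain C0 where "is_sum A a B b C0"
      using is_sum_exists[of A a b B] \<open>is_struct ar A\<close> \<open>a \<in> univ A\<close> \<open>b \<in> univ B\<close>
      by (auto simp: is_struct_def)
    have "hom_exists C D \<longleftrightarrow> root_images A a D \<inter> root_images B b D \<noteq> {}"
      if "is_sum A a B b C" for C
      using hom_exists_sum_iff[OF that] \<open>is_struct ar A\<close> \<open>is_struct ar B\<close>
        \<open>a \<in> univ A\<close> \<open>b \<in> univ B\<close> by blast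
    moreover have "forest ar C0"
      using forest_sum[OF \<open>is_sum A a B b C0\<close> \<open>forest ar A\<close> \<open>forest ar B\<close>] .
    ultimately show ?thesis
      using \<open>is_sum A a B b C0\<close> B_root
      unfolding residual_def compatible_roots_def by blast
  qed
  then show ?thesis
    unfolding residual_def compatible_roots_def by auto
qed

theorem lemma3p3:
  fixes ar :: "'r::finite \<Rightarrow> nat" and D :: "('r, 'd) struct"
  assumes "is_struct ar D"
  shows "regular ar {A :: ('r, nat) struct. forest ar A \<and> hom_exists A D}"
proof -
  have "{residual ar {A :: ('r, nat) struct. forest ar A \<and> hom_exists A D} A a | A a.
          rooted_forest ar A a} \<subseteq> compatible_roots ar D ` Pow (univ D)"
    using residual_hom_forests root_images_subset
    by (fastforce simp: rooted_forest_def)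
  moreover have "finite (compatible_roots ar D ` Pow (univ D))"
    using assms by (simp add: is_struct_def)
  ultimately show ?thesis
    unfolding regular_def by (rule finite_subset)
qed

end
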